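(* Let $\mathcal{X}$ be a nonempty convex subset of $\mathbb{R}^n$ and $\mathbf{F}:\mathcal{X}\to I(\mathbb{R})$ a convex interval-valued function. If $\mathbf{F}$ is $gH$-differentiable at $\bar{x}\in\mathcal{X}$, then $\partial\mathbf{F}(\bar{x})=\{\nabla\mathbf{F}(\bar{x})\}$.
   Context: $I(\mathbb{R})$: nonempty compact intervals $\mathbf{A}=[\underline{a},\overline{a}]$; $\mathbf{A}\oplus\mathbf{B}=[\underline{a}+\underline{b},\overline{a}+\overline{b}]$; $\lambda\odot\mathbf{A}=[\min\{\lambda\underline{a},\lambda\overline{a}\},\max\{\lambda\underline{a},\lambda\overline{a}\}]$; $\mathbf{A}\ominus_{gH}\mathbf{B}=[\min\{\underline{a}-\underline{b},\overline{a}-\overline{b}\},\max\{\underline{a}-\underline{b},\overline{a}-\overline{b}\}]$; $\mathbf{0}=[0,0]$; $\mathbf{A}\preceq\mathbf{B}$ iff $\underline{a}\le\underline{b}$ and $\overline{a}\le\overline{b}$; limits w.r.t. $\|\mathbf{A}\|_{I(\mathbb{R})}=\max\{|\underline{a}|,|\overline{a}|\}$. $d^T\odot\widehat{\mathbf{A}}=\bigoplus_{i}d_i\odot\mathbf{A}_i$ for $d\in\mathbb{R}^n$, $\widehat{\mathbf{A}}\in I(\mathbb{R})^n$. Convex IVF: $\mathbf{F}(\lambda x_1+(1-\lambda)x_2)\preceq\lambda\odot\mathbf{F}(x_1)\oplus(1-\lambda)\odot\mathbf{F}(x_2)$. $gH$-derivative of a one-variable IVF: $\mathbf{G}'(t)=\lim_{s\to0}\frac1s\odot(\mathbf{G}(t+s)\ominus_{gH}\mathbf{G}(t))$;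 $D_i\mathbf{F}(\bar{x})$ is the $gH$-derivative at $\bar{x}_i$ of $x_i\mapsto\mathbf{F}(\bar{x}_1,\dots,x_i,\dots,\bar{x}_n)$; $\nabla\mathbf{F}(\bar{x})=(D_1\mathbf{F}(\bar{x}),\dots,D_n\mathbf{F}(\bar{x}))^T$. $\mathbf{F}$ is $gH$-differentiable at $\bar{x}$ if there exist $\widehat{\mathbf{A}}\in I(\mathbb{R})^n$, an interval-valued $\mathbf{E}(\mathbf{F}(\bar{x});d)\to\mathbf{0}$ as $\|d\|\to0$, and $\delta>0$ with $\mathbf{F}(\bar{x}+d)\ominus_{gH}\mathbf{F}(\bar{x})=d^T\odot\widehat{\mathbf{A}}\oplus\|d\|\odot\mathbf{E}(\mathbf{F}(\bar{x});d)$ for $\|d\|<\delta$. $gH$-subgradient at $\bar{x}$: $\widehat{\mathbf{G}}\in I(\mathbb{R})^n$ with $(x-\bar{x})^T\odot\widehat{\mathbf{G}}\preceq\mathbf{F}(x)\ominus_{gH}\mathbf{F}(\bar{x})$ for all $x\in\mathcal{X}$; $\partial\mathbf{F}(\bar{x})$ is the set of all of them. *)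

theory Defs
  imports "HOL-Analysis.Analysis"
begin

text \<open>Compact intervals [a_lo, a_hi] are represented as pairs (a_lo, a_hi) with a_lo \<le> a_hi.\<close>
type_synonym ivl = "real \<times> real"

definition ivl_ok :: "ivl \<Rightarrow> bool" where
  "ivl_ok A \<longleftrightarrow> fst A \<le> snd A"

definition ivl_add :: "ivl \<Rightarrow> ivl \<Rightarrow> ivl" where
  "ivl_add A B = (fst A + fst B, snd A + snd B)"

definition ivl_scale :: "real \<Rightarrow> ivl \<Rightarrow> ivl" where
  "ivl_scale l A = (min (l * fst A) (l * snd A), max (l * fst A) (l * snd A))"

definition ivl_gHsub :: "ivl \<Rightarrow> ivl \<Rightarrow> ivl" where
  "ivl_gHsub A B = (min (fst A - fst B) (snd A - snd B), max (fst A - fst B) (snd A - snd B))"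

definition ivl_le :: "ivl \<Rightarrow> ivl \<Rightarrow> bool" where
  "ivl_le A B \<longleftrightarrow> fst A \<le> fst B \<and> snd A \<le> snd B"

definition ivl_norm :: "ivl \<Rightarrow> real" where
  "ivl_norm A = max \<bar>fst A\<bar> \<bar>snd A\<bar>"

definition ivl_dot :: "real^'n \<Rightarrow> ivl^'n \<Rightarrow> ivl" where
  "ivl_dot d A = Finite_Set.fold (\<lambda>i acc. ivl_add (ivl_scale (d $ i) (A $ i)) acc) (0, 0) UNIV"

definition convex_ivf :: "(real^'n) set \<Rightarrow> (real^'n \<Rightarrow> ivl) \<Rightarrow> bool" where
  "convex_ivf X F \<longleftrightarrow> (\<forall>x1\<in>X. \<forall>x2\<in>X. \<forall>l::real. 0 \<le> l \<and> l \<le> 1 \<longrightarrow>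
      ivl_le (F (l *\<^sub>R x1 + (1 - l) *\<^sub>R x2))
             (ivl_add (ivl_scale l (F x1)) (ivl_scale (1 - l) (F x2))))"

definition gH_has_deriv :: "(real \<Rightarrow> ivl) \<Rightarrow> real \<Rightarrow> ivl \<Rightarrow> bool" where
  "gH_has_deriv G t L \<longleftrightarrow> (\<forall>e>0. \<exists>h>0. \<forall>s. s \<noteq> 0 \<and> \<bar>s\<bar> < h \<longrightarrow>
      ivl_norm (ivl_gHsub (ivl_scale (1 / s) (ivl_gHsub (G (t + s)) (G t))) L) < e)"

definition gH_partial :: "(real^'n \<Rightarrow> ivl) \<Rightarrow> real^'n \<Rightarrow> 'n \<Rightarrow> ivl" where
  "gH_partial F xb i = (THE L. ivl_ok L \<and>
      gH_has_deriv (\<lambda>t. F (\<chi> j. if j = i then t else xb $ j)) (xb $ i) L)"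

definition gH_gradient :: "(real^'n \<Rightarrow> ivl) \<Rightarrow> real^'n \<Rightarrow> ivl^'n" where
  "gH_gradient F xb = (\<chi> i. gH_partial F xb i)"

text \<open>gH-differentiability at xb; F is required to be defined (i.e. xb+d \<in> X) for \<parallel>d\<parallel> < \<delta>.\<close>
definition gH_differentiable :: "(real^'n) set \<Rightarrow> (real^'n \<Rightarrow> ivl) \<Rightarrow> real^'n \<Rightarrow> bool" where
  "gH_differentiable X F xb \<longleftrightarrow> (\<exists>(A::ivl^'n) (E::real^'n \<Rightarrow> ivl) (\<delta>::real).
      (\<forall>i. ivl_ok (A $ i)) \<and> \<delta> > 0 \<and>
      (\<forall>d. norm d < \<delta> \<longrightarrow> xb + d \<in> X \<and> ivl_ok (E d)) \<and>
      (\<forall>e>0. \<exists>h>0. \<forall>d. 0 < norm d \<and> norm d < h \<longrightarrow> ivl_norm (E d) < e) \<and>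
      (\<forall>d. norm d < \<delta> \<longrightarrow>
         ivl_gHsub (F (xb + d)) (F xb) = ivl_add (ivl_dot d A) (ivl_scale (norm d) (E d))))"

definition gH_subdiff :: "(real^'n) set \<Rightarrow> (real^'n \<Rightarrow> ivl) \<Rightarrow> real^'n \<Rightarrow> (ivl^'n) set" where
  "gH_subdiff X F xb = {G. (\<forall>i. ivl_ok (G $ i)) \<and>
      (\<forall>x\<in>X. ivl_le (ivl_dot (x - xb) G) (ivl_gHsub (F x) (F xb)))}"

end

theory Submission
  imports Defs
begin

text \<open>Intervals are points of the ordered Euclidean plane \<open>real \<times> real\<close>: \<open>\<oplus>\<close> is \<open>+\<close>,
\<open>\<preceq>\<close> is the componentwise order, scaling by \<open>\<lambda> \<ge> 0\<close> is \<open>*\<^sub>R\<close>, and the interval norm of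
\<open>A \<ominus>\<^sub>g\<^sub>H B\<close> is the max-norm of \<open>A - B\<close>. So gH-limits are ordinary limits, and
gH-differentiability says \<open>F(xb + d) \<ominus>\<^sub>g\<^sub>H F(xb) = d\<^sup>T \<odot> A + \<parallel>d\<parallel> E(d)\<close> with \<open>E(d) \<rightarrow> 0\<close>.

Along the \<open>i\<close>-th coordinate line the difference quotient is \<open>A\<^sub>i + sgn(s) \<odot> E(s e\<^sub>i)\<close>, so the
gradient is \<open>A\<close>. Convexity gives \<open>F(xb + t(x - xb)) \<ominus>\<^sub>g\<^sub>H F(xb) \<preceq> t (F(x) \<ominus>\<^sub>g\<^sub>H F(xb))\<close> for
\<open>0 \<le> t \<le> 1\<close>; dividing the expansion by \<open>t\<close> and letting \<open>t \<rightarrow> 0\<^sup>+\<close> shows that \<open>A\<close> is a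
subgradient. Conversely a subgradient \<open>G\<close> satisfies \<open>s \<odot> G\<^sub>i \<preceq> F(xb + s e\<^sub>i) \<ominus>\<^sub>g\<^sub>H F(xb)\<close>;
dividing by \<open>s > 0\<close>, and by \<open>s < 0\<close> (which reverses \<open>\<preceq>\<close>), traps \<open>G\<^sub>i\<close> between the one-sided
limits of the difference quotient, both equal to \<open>A\<^sub>i\<close>.\<close>

lemma ivl_add_eq_plus [simp]: "ivl_add A B = A + B"
  by (simp add: ivl_add_def prod_eq_iff)

lemma ivl_le_iff_less_eq: "ivl_le A B \<longleftrightarrow> A \<le> B"
  by (simp add: ivl_le_def less_eq_prod_def)

lemma ivl_ok_ivl_scale [simp]: "ivl_ok (ivl_scale l A)"
  by (simp add: ivl_ok_def ivl_scale_def)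

lemma ivl_ok_gHsub [simp]: "ivl_ok (ivl_gHsub A B)"
  by (simp add: ivl_ok_def ivl_gHsub_def)

lemma ivl_scale_nonneg: "ivl_ok A \<Longrightarrow> 0 \<le> l \<Longrightarrow> ivl_scale l A = l *\<^sub>R A"
  by (simp add: ivl_ok_def ivl_scale_def prod_eq_iff mult_left_mono)

lemma ivl_scale_zero [simp]: "ivl_scale 0 A = 0"
  by (simp add: ivl_scale_def zero_prod_def)

lemma ivl_scale_one: "ivl_ok A \<Longrightarrow> ivl_scale 1 A = A"
  by (simp add: ivl_scale_nonneg)

lemma ivl_scale_scale: "ivl_scale m (ivl_scale l A) = ivl_scale (m * l) A"
  by (cases "0 \<le> m"; cases "0 \<le> l"; cases "fst A \<le> snd A")
     (auto simp: ivl_scale_def prod_eq_iff min_def max_def mult.assoc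
       mult_left_mono mult_left_mono_neg mult_le_cancel_left)

lemma ivl_scale_nonpos: "ivl_ok A \<Longrightarrow> l \<le> 0 \<Longrightarrow> ivl_scale l A = (l * snd A, l * fst A)"
  by (simp add: ivl_ok_def ivl_scale_def mult_left_mono_neg)

lemma ivl_scale_add:
  assumes "ivl_ok A" "ivl_ok B"
  shows "ivl_scale l (A + B) = ivl_scale l A + ivl_scale l B"
proof -
  have "ivl_ok (A + B)"
    using assms by (simp add: ivl_ok_def)
  with assms show ?thesis
    by (cases "0 \<le> l") (simp_all add: ivl_scale_nonneg ivl_scale_nonpos distrib_left scaleR_right_distrib)
qed

lemma ivl_scale_mono:
  assumes "A \<le> B" "0 \<le> l"
  shows "ivl_scale l A \<le> ivl_scale l B"
proof -
  have "l * fst A \<le> l * fst B" "l * snd A \<le> l * snd B"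
    using assms by (simp_all add: less_eq_prod_def mult_left_mono)
  then show ?thesis
    by (simp add: ivl_scale_def less_eq_prod_def min_le_iff_disj le_max_iff_disj) linarith
qed

lemma ivl_scale_antimono:
  assumes "A \<le> B" "l \<le> 0"
  shows "ivl_scale l B \<le> ivl_scale l A"
proof -
  have "l * fst B \<le> l * fst A" "l * snd B \<le> l * snd A"
    using assms by (simp_all add: less_eq_prod_def mult_left_mono_neg)
  then show ?thesis
    by (simp add: ivl_scale_def less_eq_prod_def min_le_iff_disj le_max_iff_disj) linarith
qed

lemma norm_ivl_scale: "norm (ivl_scale l A) = \<bar>l\<bar> * norm A"
proof -
  have "norm (ivl_scale l A) = norm (l *\<^sub>R A)"
    by (simp add: ivl_scale_def norm_prod_def min_def max_def add.commute)
  then show ?thesis by simp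
qed

lemma ivl_norm_gHsub: "ivl_norm (ivl_gHsub A B) = ivl_norm (A - B)"
  by (auto simp: ivl_norm_def ivl_gHsub_def min_def max_def)

lemma ivl_norm_nonneg [simp]: "0 \<le> ivl_norm A"
  by (simp add: ivl_norm_def)

lemma tendsto_iff_ivl_norm:
  fixes f :: "'a \<Rightarrow> ivl"
  shows "(f \<longlongrightarrow> L) F \<longleftrightarrow> ((\<lambda>x. ivl_norm (f x - L)) \<longlongrightarrow> 0) F"
proof -
  have below: "ivl_norm Z \<le> norm Z" for Z :: ivl
    by (simp add: ivl_norm_def norm_prod_def real_le_rsqrt sqrt_sum_squares_le_sum_abs)
  have above: "norm Z \<le> 2 * ivl_norm Z" for Z :: ivl
    using sqrt_sum_squares_le_sum_abs[of "fst Z" "snd Z"] by (simp add: ivl_norm_def norm_prod_def)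
  show ?thesis
  proof
    assume "(f \<longlongrightarrow> L) F"
    then have "((\<lambda>x. norm (f x - L)) \<longlongrightarrow> 0) F"
      using tendsto_norm_zero Lim_null by blast
    then show "((\<lambda>x. ivl_norm (f x - L)) \<longlongrightarrow> 0) F"
      by (rule Lim_null_comparison[rotated]) (simp add: below)
  next
    assume "((\<lambda>x. ivl_norm (f x - L)) \<longlongrightarrow> 0) F"
    then have "((\<lambda>x. 2 * ivl_norm (f x - L)) \<longlongrightarrow> 0) F"
      using tendsto_mult_right_zero by blast
    then have "((\<lambda>x. f x - L) \<longlongrightarrow> 0) F"
      by (rule Lim_null_comparison[rotated]) (simp add: above)
    then show "(f \<longlongrightarrow> L) F"
      by (rule Lim_null[THEN iffD2])
  qed
qed

lemma ivl_dot_eq_sum: "ivl_dot d A = (\<Sum>i\<in>UNIV. ivl_scale (d $ i) (A $ i))"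
  unfolding ivl_dot_def ivl_add_eq_plus by (simp add: sum.eq_fold comp_def zero_prod_def)

lemma ivl_dot_axis: "ivl_dot (s *\<^sub>R axis i 1) A = ivl_scale s (A $ i)"
proof -
  have "(\<Sum>j\<in>UNIV. ivl_scale ((s *\<^sub>R axis i 1) $ j) (A $ j))
      = (\<Sum>j\<in>UNIV. if j = i then ivl_scale s (A $ i) else 0)"
    by (rule sum.cong) (auto simp: axis_def)
  then show ?thesis
    by (simp add: ivl_dot_eq_sum)
qed

lemma ivl_dot_scaleR: "0 \<le> t \<Longrightarrow> ivl_dot (t *\<^sub>R d) A = t *\<^sub>R ivl_dot d A"
proof -
  assume "0 \<le> t"
  then have "ivl_scale (t * c) B = t *\<^sub>R ivl_scale c B" for c B
    by (simp add: ivl_scale_nonneg flip: ivl_scale_scale)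
  then show ?thesis
    by (simp add: ivl_dot_eq_sum scaleR_sum_right)
qed

lemma coordinate_update_eq_axis:
  "(\<chi> j. if j = i then t else x $ j) = x + (t - x $ i) *\<^sub>R axis i 1"
  by (simp add: vec_eq_iff axis_def)

definition gH_quotient :: "(real \<Rightarrow> ivl) \<Rightarrow> real \<Rightarrow> real \<Rightarrow> ivl" where
  "gH_quotient G t s = ivl_scale (1 / s) (ivl_gHsub (G (t + s)) (G t))"

lemma gH_has_deriv_iff_tendsto: "gH_has_deriv G t L \<longleftrightarrow> (gH_quotient G t \<longlongrightarrow> L) (at 0)"
proof -
  have "gH_has_deriv G t L \<longleftrightarrow> ((\<lambda>s. ivl_norm (gH_quotient G t s - L)) \<longlongrightarrow> 0) (at 0)"
    by (simp add: gH_has_deriv_def LIM_eq gH_quotient_def ivl_norm_gHsub)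
  then show ?thesis
    by (simp add: tendsto_iff_ivl_norm)
qed

lemma gH_has_deriv_unique: "gH_has_deriv G t L \<Longrightarrow> gH_has_deriv G t L' \<Longrightarrow> L = L'"
  unfolding gH_has_deriv_iff_tendsto by (rule tendsto_unique[OF at_neq_bot])

lemma gH_quotient_subgradient_bounds:
  assumes "ivl_ok g" and sub: "ivl_scale s g \<le> ivl_gHsub (G (t + s)) (G t)"
  shows "0 < s \<Longrightarrow> g \<le> gH_quotient G t s"
    and "s < 0 \<Longrightarrow> gH_quotient G t s \<le> g"
proof -
  have scale_back: "ivl_scale (1 / s) (ivl_scale s g) = g" if "s \<noteq> 0"
    using that \<open>ivl_ok g\<close> by (simp add: ivl_scale_scale ivl_scale_one)
  show "g \<le> gH_quotient G t s" if "0 < s"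
    using ivl_scale_mono[OF sub, of "1 / s"] that by (simp add: gH_quotient_def scale_back)
  show "gH_quotient G t s \<le> g" if "s < 0"
    using ivl_scale_antimono[OF sub, of "1 / s"] that by (simp add: gH_quotient_def scale_back)
qed

lemma gH_has_deriv_subgradient_eq:
  assumes deriv: "gH_has_deriv G t L" and "ivl_ok g"
    and sub: "\<forall>\<^sub>F s in at 0. ivl_scale s g \<le> ivl_gHsub (G (t + s)) (G t)"
  shows "g = L"
proof -
  have "\<forall>\<^sub>F s in at_right (0::real). 0 < s" "\<forall>\<^sub>F s in at_left (0::real). s < 0"
    by (simp_all add: eventually_at_filter)
  moreover have "\<forall>\<^sub>F s in at_right 0. ivl_scale s g \<le> ivl_gHsub (G (t + s)) (G t)"
    and "\<forall>\<^sub>F s in at_left 0. ivl_scale s g \<le> ivl_gHsub (G (t + s)) (G t)"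
    using sub by (simp_all add: eventually_at_split)
  ultimately have above: "\<forall>\<^sub>F s in at_right 0. gH_quotient G t s \<in> {g..}"
    and below: "\<forall>\<^sub>F s in at_left 0. gH_quotient G t s \<in> {..g}"
    using gH_quotient_subgradient_bounds[OF \<open>ivl_ok g\<close>] by (auto elim: eventually_elim2)
  have right: "(gH_quotient G t \<longlongrightarrow> L) (at_right 0)"
    and left: "(gH_quotient G t \<longlongrightarrow> L) (at_left 0)"
    using deriv by (simp_all add: gH_has_deriv_iff_tendsto filterlim_at_split)
  have "L \<in> {g..}"
    using Lim_in_closed_set[OF closed_eucl_atLeast above trivial_limit_at_right_real right] .
  moreover have "L \<in> {..g}"
    using Lim_in_closed_set[OF closed_eucl_atMost below trivial_limit_at_left_real left] .
  ultimately show ?thesis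
    by simp
qed

lemma convex_ivf_gHsub_le:
  assumes "convex_ivf X F" "\<forall>x\<in>X. ivl_ok (F x)" "x \<in> X" "y \<in> X" "0 \<le> t" "t \<le> 1"
  shows "ivl_gHsub (F (y + t *\<^sub>R (x - y))) (F y) \<le> t *\<^sub>R ivl_gHsub (F x) (F y)"
proof -
  have "y + t *\<^sub>R (x - y) = t *\<^sub>R x + (1 - t) *\<^sub>R y"
    by (simp add: algebra_simps)
  then have "F (y + t *\<^sub>R (x - y)) \<le> t *\<^sub>R F x + (1 - t) *\<^sub>R F y"
    using assms by (simp add: convex_ivf_def ivl_le_iff_less_eq ivl_scale_nonneg)
  then have "fst (F (y + t *\<^sub>R (x - y))) - fst (F y) \<le> t * (fst (F x) - fst (F y))"
    and "snd (F (y + t *\<^sub>R (x - y))) - snd (F y) \<le> t * (snd (F x) - snd (F y))"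
    by (auto simp: less_eq_prod_def algebra_simps)
  with \<open>0 \<le> t\<close> show ?thesis
    by (simp add: ivl_gHsub_def less_eq_prod_def min_mult_distrib_left max_mult_distrib_left
      min_le_iff_disj le_max_iff_disj) linarith
qed

locale gH_expansion =
  fixes X :: "(real^'n) set" and F :: "real^'n \<Rightarrow> ivl" and xb :: "real^'n"
    and A :: "ivl^'n" and E :: "real^'n \<Rightarrow> ivl" and \<delta> :: real
  assumes coefficients_ok: "ivl_ok (A $ i)"
    and radius_pos: "0 < \<delta>"
    and ball_subset: "norm d < \<delta> \<Longrightarrow> xb + d \<in> X"
    and remainder_ok: "norm d < \<delta> \<Longrightarrow> ivl_ok (E d)"
    and remainder_tendsto: "(E \<longlongrightarrow> 0) (at 0)"
    and expansion: "norm d < \<delta> \<Longrightarrow> ivl_gHsub (F (xb + d)) (F xb) = ivl_dot d A + norm d *\<^sub>R E d"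
begin

lemma remainder_along_line: "d \<noteq> 0 \<Longrightarrow> ((\<lambda>s. E (s *\<^sub>R d)) \<longlongrightarrow> 0) (at 0)"
proof -
  assume "d \<noteq> 0"
  then have "filterlim (\<lambda>s. s *\<^sub>R d) (at 0) (at (0::real))"
    by (intro filterlim_atI) (auto intro!: tendsto_eq_intros simp: eventually_at_filter)
  then show ?thesis
    using remainder_tendsto by (rule filterlim_compose[rotated])
qed

lemma partial_has_gH_deriv: "gH_has_deriv (\<lambda>t. F (\<chi> j. if j = i then t else xb $ j)) (xb $ i) (A $ i)"
proof -
  let ?Q = "gH_quotient (\<lambda>t. F (\<chi> j. if j = i then t else xb $ j)) (xb $ i)"
  let ?R = "\<lambda>s. ivl_scale (sgn s) (E (s *\<^sub>R axis i 1))"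
  have "\<forall>\<^sub>F s in at 0. s \<noteq> 0 \<and> \<bar>s\<bar> < \<delta>"
    using radius_pos by (auto simp: eventually_at intro: exI[of _ \<delta>])
  then have "\<forall>\<^sub>F s in at 0. A $ i + ?R s = ?Q s"
  proof eventually_elim
    case (elim s)
    let ?e = "E (s *\<^sub>R axis i 1)"
    have "ivl_gHsub (F (xb + s *\<^sub>R axis i 1)) (F xb) = ivl_scale s (A $ i) + ivl_scale \<bar>s\<bar> ?e"
      using expansion[of "s *\<^sub>R axis i 1"] remainder_ok[of "s *\<^sub>R axis i 1"] elim
      by (simp add: ivl_dot_axis ivl_scale_nonneg)
    then have "?Q s = ivl_scale 1 (A $ i) + ivl_scale (\<bar>s\<bar> / s) ?e"
      using elim by (simp add: gH_quotient_def coordinate_update_eq_axis ivl_scale_add ivl_scale_scale)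
    also have "\<dots> = A $ i + ?R s"
      using elim coefficients_ok by (simp add: ivl_scale_one sgn_if)
    finally show ?case by simp
  qed
  moreover have "(?R \<longlongrightarrow> 0) (at 0)"
  proof (rule Lim_null_comparison)
    show "\<forall>\<^sub>F s in at 0. norm (?R s) \<le> norm (E (s *\<^sub>R axis i 1))"
      by (simp add: norm_ivl_scale abs_sgn mult_left_le_one_le)
    show "((\<lambda>s. norm (E (s *\<^sub>R axis i 1))) \<longlongrightarrow> 0) (at 0)"
      using remainder_along_line[of "axis i 1"] by (simp add: tendsto_norm_zero)
  qed
  from tendsto_add[OF tendsto_const[of "A $ i"] this]
  have "((\<lambda>s. A $ i + ?R s) \<longlongrightarrow> A $ i) (at 0)"
    by (simp only: add_0_right)
  ultimately show ?thesis
    unfolding gH_has_deriv_iff_tendsto by (rule Lim_transform_eventually[rotated])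
qed

lemma gradient_eq: "gH_gradient F xb = A"
proof -
  have "gH_partial F xb i = A $ i" for i
    unfolding gH_partial_def
    using partial_has_gH_deriv coefficients_ok gH_has_deriv_unique by blast
  then show ?thesis
    by (simp add: gH_gradient_def vec_eq_iff)
qed

lemma gradient_in_subdiff:
  assumes "convex_ivf X F" "\<forall>x\<in>X. ivl_ok (F x)"
  shows "A \<in> gH_subdiff X F xb"
proof -
  have "ivl_dot (x - xb) A \<le> ivl_gHsub (F x) (F xb)" if "x \<in> X" for x
  proof -
    define d where "d = x - xb"
    define D where "D = ivl_gHsub (F x) (F xb)"
    have "\<forall>\<^sub>F t in at_right 0. ivl_dot d A + norm d *\<^sub>R E (t *\<^sub>R d) \<in> {..D}"
    proof -
      have "\<forall>\<^sub>F t in at_right 0. t * norm d < \<delta>"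
        by (rule order_tendstoD(2)[OF _ radius_pos]) (auto intro!: tendsto_eq_intros)
      moreover have "\<forall>\<^sub>F t in at_right (0::real). t < 1"
        by (rule order_tendstoD(2)[OF tendsto_ident_at zero_less_one])
      moreover have "\<forall>\<^sub>F t in at_right (0::real). 0 < t"
        by (simp add: eventually_at_filter)
      ultimately show ?thesis
      proof eventually_elim
        case (elim t)
        have "t *\<^sub>R (ivl_dot d A + norm d *\<^sub>R E (t *\<^sub>R d)) = ivl_gHsub (F (xb + t *\<^sub>R d)) (F xb)"
          using expansion[of "t *\<^sub>R d"] elim by (simp add: ivl_dot_scaleR scaleR_right_distrib)
        also have "\<dots> \<le> t *\<^sub>R D"
          using convex_ivf_gHsub_le[OF assms \<open>x \<in> X\<close> ball_subset[of 0]] elim radius_pos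
          by (simp add: d_def D_def)
        finally show ?case
          using elim by (simp add: less_eq_prod_def)
      qed
    qed
    moreover have "((\<lambda>t. ivl_dot d A + norm d *\<^sub>R E (t *\<^sub>R d)) \<longlongrightarrow> ivl_dot d A) (at_right 0)"
    proof (cases "d = 0")
      case False
      have "((\<lambda>t. E (t *\<^sub>R d)) \<longlongrightarrow> 0) (at_right 0)"
        by (rule tendsto_mono[OF at_le[OF subset_UNIV] remainder_along_line[OF False]])
      from tendsto_add[OF tendsto_const[of "ivl_dot d A"] tendsto_scaleR[OF tendsto_const[of "norm d"] this]]
      show ?thesis
        by (simp only: scaleR_zero_right add_0_right)
    qed simp
    ultimately have "ivl_dot d A \<in> {..D}"
      by (rule Lim_in_closed_set[OF closed_eucl_atMost _ trivial_limit_at_right_real])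
    then show ?thesis
      by (simp add: d_def D_def)
  qed
  then show ?thesis
    using coefficients_ok by (simp add: gH_subdiff_def ivl_le_iff_less_eq)
qed

lemma subdiff_unique:
  assumes "G \<in> gH_subdiff X F xb"
  shows "G = A"
proof -
  have subgradient: "\<forall>x\<in>X. ivl_dot (x - xb) G \<le> ivl_gHsub (F x) (F xb)"
    using assms by (simp add: gH_subdiff_def ivl_le_iff_less_eq)
  have "G $ i = A $ i" for i
  proof (rule gH_has_deriv_subgradient_eq[OF partial_has_gH_deriv])
    show "ivl_ok (G $ i)"
      using assms by (simp add: gH_subdiff_def)
    have "\<forall>\<^sub>F s in at 0. \<bar>s\<bar> < \<delta>"
      using radius_pos by (auto simp: eventually_at intro: exI[of _ \<delta>])
    then show "\<forall>\<^sub>F s in at 0. ivl_scale s (G $ i) \<le>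
        ivl_gHsub (F (\<chi> j. if j = i then xb $ i + s else xb $ j)) (F (\<chi> j. if j = i then xb $ i else xb $ j))"
    proof eventually_elim
      case (elim s)
      then have "xb + s *\<^sub>R axis i 1 \<in> X"
        by (intro ball_subset) simp
      then show ?case
        using subgradient[rule_format, of "xb + s *\<^sub>R axis i 1"]
        by (simp add: ivl_dot_axis coordinate_update_eq_axis)
    qed
  qed
  then show ?thesis
    by (simp add: vec_eq_iff)
qed

lemma subdiff_eq_gradient:
  assumes "convex_ivf X F" "\<forall>x\<in>X. ivl_ok (F x)"
  shows "gH_subdiff X F xb = {gH_gradient F xb}"
  unfolding gradient_eq using gradient_in_subdiff[OF assms] subdiff_unique by blast

end

lemma gH_differentiableE:
  assumes "gH_differentiable X F xb"
  obtains A E \<delta> where "gH_expansion X F xb A E \<delta>"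
proof -
  obtain A E \<delta> where A_ok: "\<forall>i. ivl_ok (A $ i)" and "\<delta> > 0"
    and ball: "\<forall>d. norm d < \<delta> \<longrightarrow> xb + d \<in> X \<and> ivl_ok (E d)"
    and small: "\<forall>e>0. \<exists>h>0. \<forall>d. 0 < norm d \<and> norm d < h \<longrightarrow> ivl_norm (E d) < e"
    and expansion: "\<forall>d. norm d < \<delta> \<longrightarrow>
      ivl_gHsub (F (xb + d)) (F xb) = ivl_add (ivl_dot d A) (ivl_scale (norm d) (E d))"
    using assms unfolding gH_differentiable_def by blast
  have "(E \<longlongrightarrow> 0) (at 0)"
    using small by (simp add: tendsto_iff_ivl_norm LIM_eq)
  with A_ok \<open>\<delta> > 0\<close> ball expansion have "gH_expansion X F xb A E \<delta>"
    by unfold_locales (simp_all add: ivl_scale_nonneg)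
  then show thesis ..
qed

theorem mainTheorem6:
  fixes X :: "(real^'n) set" and F :: "real^'n \<Rightarrow> ivl" and xb :: "real^'n"
  assumes "X \<noteq> {}" and "convex X"
    and "\<forall>x\<in>X. ivl_ok (F x)"
    and "convex_ivf X F"
    and "xb \<in> X"
    and "gH_differentiable X F xb"
  shows "gH_subdiff X F xb = {gH_gradient F xb}"
proof -
  obtain A E \<delta> where "gH_expansion X F xb A E \<delta>"
    using gH_differentiableE[OF \<open>gH_differentiable X F xb\<close>] .
  then show ?thesis
    using gH_expansion.subdiff_eq_gradient \<open>convex_ivf X F\<close> \<open>\<forall>x\<in>X. ivl_ok (F x)\<close> by blast
qed

end
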